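(* Under the standing setup, for $\theta>0$ let $A_n(\theta)$ be the event that for every vertex $v$ with $|v|=n$, at most one of the variables $\{X_e:e\in I_v\}$ satisfies $|X_e|>b_n\theta/n$. Then for every $\theta>0$, $\lim_{n\to\infty}P^*\big(A_n(\theta)^c\big)=0$.
   Context: Standing setup. Let $\{Z_i\}_{i\ge0}$ be a Galton–Watson process with $Z_0\equiv1$ and offspring variable $Z_1$ with mean $\mu:=E(Z_1)\in(1,\infty)$, satisfying $E(Z_1\log^+Z_1)<\infty$, with genealogical tree rooted at $o$. For a vertex $v$, $|v|$ is its generation and $I_v$ the set of edges of the path from $o$ to $v$. Independently of the tree, attach i.i.d. real random variables $X_e$ to the edges with $P(|X_e|>x)=x^{-\alpha}L(x)$ ($\alpha>0$, $L$ slowly varying) and $P(X_e>x)/P(|X_e|>x)\to p$, $P(X_e<-x)/P(|X_e|>x)\to q$, $p,q\ge0$, $p+q=1$. Let $b_n>0$ satisfy $\mu^nP(b_n^{-1}X_e\in\cdot)\to\nu_\alpha$ vaguely on $[-\infty,\infty]\setminus\{0\}$, with $\nu_\alpha(dx)=\alpha px^{-\alpha-1}\mathbf 1_{(0,\infty)}(x)dx+\alpha q(-x)^{-\alpha-1}\mathbf 1_{(-\infty,0)}(x)dx$. $P^*$ denotes conditioning on survival. *)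

theory Defs
  imports "HOL-Probability.Probability"
begin

text \<open>Ulam--Harris encoding of the Galton--Watson tree.  A vertex is a list of
  natural numbers; the root o is the empty list.  N u w is the number of children
  of vertex u in outcome w.  The edge leading into a non-root vertex v is identified
  with v itself, so the edge set I_v of the path from o to v is
  {take (k+1) v | k < length v}, and |v| = length v.\<close>

definition gw_vertex :: "(nat list \<Rightarrow> 'w \<Rightarrow> nat) \<Rightarrow> 'w \<Rightarrow> nat list \<Rightarrow> bool" where
  "gw_vertex N w v \<longleftrightarrow> (\<forall>k < length v. v ! k < N (take k v) w)"

definition gw_survival :: "(nat list \<Rightarrow> 'w \<Rightarrow> nat) \<Rightarrow> 'w set" where
  "gw_survival N = {w. \<forall>n. \<exists>v. length v = n \<and> gw_vertex N w v}"

definition slowly_varying :: "(real \<Rightarrow> real) \<Rightarrow> bool" where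
  "slowly_varying L \<longleftrightarrow> (\<forall>\<^sub>F x in at_top. L x > 0) \<and>
     (\<forall>c>0. ((\<lambda>x. L (c * x) / L x) \<longlongrightarrow> 1) at_top)"

text \<open>Density of the limit measure nu_alpha on the reals (it has no mass at +-infinity).\<close>
definition nu_alpha_density :: "real \<Rightarrow> real \<Rightarrow> real \<Rightarrow> real \<Rightarrow> real" where
  "nu_alpha_density \<alpha> p q x =
     (if x > 0 then \<alpha> * p * x powr (-\<alpha> - 1)
      else if x < 0 then \<alpha> * q * (-x) powr (-\<alpha> - 1) else 0)"

text \<open>Continuous functions with compact support in [-infinity,infinity] minus {0}:
  continuous on the extended reals and vanishing on a neighbourhood of 0.\<close>
definition cont_compact_supp_away0 :: "(ereal \<Rightarrow> real) \<Rightarrow> bool" where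
  "cont_compact_supp_away0 f \<longleftrightarrow> continuous_on UNIV f \<and>
     (\<exists>\<epsilon>>0. \<forall>y::real. \<bar>y\<bar> < \<epsilon> \<longrightarrow> f (ereal y) = 0)"

definition vague_conv_nu_alpha ::
  "'w measure \<Rightarrow> ('w \<Rightarrow> real) \<Rightarrow> real \<Rightarrow> (nat \<Rightarrow> real) \<Rightarrow> real \<Rightarrow> real \<Rightarrow> real \<Rightarrow> bool" where
  "vague_conv_nu_alpha M X \<mu> b \<alpha> p q \<longleftrightarrow>
     (\<forall>f. cont_compact_supp_away0 f \<longrightarrow>
        ((\<lambda>n. \<mu> ^ n * (\<integral>w. f (ereal (X w / b n)) \<partial>M))
          \<longlonglongrightarrow> (\<integral>x. f (ereal x) * nu_alpha_density \<alpha> p q x \<partial>lborel)))"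

definition A_event :: "(nat list \<Rightarrow> 'w \<Rightarrow> nat) \<Rightarrow> (nat list \<Rightarrow> 'w \<Rightarrow> real) \<Rightarrow> (nat \<Rightarrow> real)
    \<Rightarrow> real \<Rightarrow> nat \<Rightarrow> 'w set" where
  "A_event N X b \<theta> n = {w. \<forall>v. length v = n \<and> gw_vertex N w v \<longrightarrow>
      card {k. k < n \<and> \<bar>X (take (Suc k) v) w\<bar> > b n * \<theta> / real n} \<le> 1}"

end

theory Submission
  imports Defs "HOL-Real_Asymp.Real_Asymp"
begin

(* If A_n(theta) fails, some vertex v of generation n carries two edges k < j on its path with
   |X_e| > b_n theta / n.  For fixed v, k, j this event has probability
   (prod_{m<n} P(Z_1 > v_m)) * F(b_n theta / n)^2, where F(t) = P(|X_e| > t), by independence of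
   the offspring numbers and the edge labels.  Summing over v gives mu^n and over the pairs at most
   n^2, so P(A_n(theta)^c) <= mu^n n^2 F(b_n theta / n)^2.  Vague convergence gives
   mu^n F(b_n) = O(1), and regular variation gives a doubling bound F(x) <= K F(2x), hence
   F(b_n theta / n) <= C n^beta F(b_n).  The bound is therefore O(n^(2 + 2 beta) / mu^n), which
   tends to 0; conditioning on survival only divides by the constant P(survival). *)

lemma doubling_iterate:
  fixes F :: "real \<Rightarrow> real"
  assumes dbl: "\<And>x. x \<ge> x0 \<Longrightarrow> F x \<le> K * F (2 * x)" and K: "K \<ge> 0"
    and x0: "x0 > 0" and x: "x \<ge> x0"
  shows "F x \<le> K ^ k * F (2 ^ k * x)"
proof (induction k)
  case (Suc k)
  have "x0 \<le> 2 ^ k * x"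
    using x x0 by (smt (verit) mult_le_cancel_right1 one_le_power)
  hence "K ^ k * F (2 ^ k * x) \<le> K ^ k * (K * F (2 * (2 ^ k * x)))"
    using dbl K by (simp add: mult_left_mono)
  with Suc show ?case by (simp add: mult_ac)
qed simp

lemma doubling_scale_bound:
  fixes F :: "real \<Rightarrow> real"
  assumes anti: "antimono F" and F_nonneg: "\<And>x. F x \<ge> 0"
    and dbl: "\<And>x. x \<ge> x0 \<Longrightarrow> F x \<le> K * F (2 * x)" and K: "K \<ge> 1"
    and x0: "x0 > 0" and x: "x \<ge> x0" and r: "r \<ge> 1"
  shows "F x \<le> K * r powr log 2 K * F (r * x)"
proof -
  define k where "k = nat \<lceil>log 2 r\<rceil>"
  have k: "real k = of_int \<lceil>log 2 r\<rceil>"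
    using r by (simp add: k_def)
  have "r = 2 powr log 2 r"
    using r by simp
  also have "\<dots> \<le> 2 ^ k"
    by (simp add: k flip: powr_realpow)
  finally have "r * x \<le> 2 ^ k * x"
    using x x0 by (intro mult_right_mono) auto
  hence F_2k: "F (2 ^ k * x) \<le> F (r * x)"
    using anti by (simp add: antimonoD)
  have "K ^ k = K powr real k"
    using K by (simp add: powr_realpow)
  also have "\<dots> \<le> K powr (log 2 r + 1)"
    using K by (intro powr_mono) (auto simp: k)
  also have "\<dots> = K * K powr log 2 r"
    using K by (simp add: powr_add)
  also have "K powr log 2 r = r powr log 2 K"
    using K r by (simp add: powr_def log_def)
  finally have K_k: "K ^ k \<le> K * r powr log 2 K" .
  have "F x \<le> K ^ k * F (2 ^ k * x)"
    using doubling_iterate[of x0 F K, OF dbl] K x0 x by simp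
  also have "\<dots> \<le> K ^ k * F (r * x)"
    using F_2k K by (simp add: mult_left_mono)
  also have "\<dots> \<le> K * r powr log 2 K * F (r * x)"
    using K_k F_nonneg by (rule mult_right_mono)
  finally show ?thesis .
qed

lemma slowly_varying_tail_doubling:
  fixes F L :: "real \<Rightarrow> real"
  assumes sv: "slowly_varying L" and F: "\<And>x. x > 0 \<Longrightarrow> F x = x powr (-\<alpha>) * L x"
  shows "\<exists>x0>0. F x0 > 0 \<and> (\<forall>x\<ge>x0. F x \<le> (2 powr \<alpha> + 1) * F (2 * x))"
proof -
  have "((\<lambda>x. inverse (L (2 * x) / L x)) \<longlongrightarrow> inverse 1) at_top"
    using sv unfolding slowly_varying_def by (intro tendsto_inverse) auto
  hence "((\<lambda>x. 2 powr \<alpha> * (L x / L (2 * x))) \<longlongrightarrow> 2 powr \<alpha> * 1) at_top"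
    by (intro tendsto_mult tendsto_const) (simp add: inverse_divide)
  hence "eventually (\<lambda>x. 2 powr \<alpha> * (L x / L (2 * x)) < 2 powr \<alpha> + 1) at_top"
    by (intro order_tendstoD(2)) auto
  moreover have "eventually (\<lambda>x. L x > 0) at_top"
    using sv unfolding slowly_varying_def by simp
  ultimately have "eventually (\<lambda>x. 2 powr \<alpha> * (L x / L (2 * x)) < 2 powr \<alpha> + 1 \<and> L x > 0) at_top"
    by (rule eventually_conj)
  then obtain x1 where x1: "\<And>x. x \<ge> x1 \<Longrightarrow> 2 powr \<alpha> * (L x / L (2 * x)) < 2 powr \<alpha> + 1 \<and> L x > 0"
    unfolding eventually_at_top_linorder by blast
  define x0 where "x0 = max x1 1"
  have "F x \<le> (2 powr \<alpha> + 1) * F (2 * x)" if "x \<ge> x0" for x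
  proof -
    have "x > 0" "L (2 * x) > 0" and ratio: "2 powr \<alpha> * (L x / L (2 * x)) < 2 powr \<alpha> + 1"
      using that x1[of x] x1[of "2 * x"] by (auto simp: x0_def)
    have "F x = 2 powr \<alpha> * (L x / L (2 * x)) * (2 powr (-\<alpha>) * x powr (-\<alpha>) * L (2 * x))"
      using F[of x] \<open>x > 0\<close> \<open>L (2 * x) > 0\<close> by (simp add: powr_minus field_simps)
    also have "\<dots> \<le> (2 powr \<alpha> + 1) * (2 powr (-\<alpha>) * x powr (-\<alpha>) * L (2 * x))"
      using ratio \<open>x > 0\<close> \<open>L (2 * x) > 0\<close> by (intro mult_right_mono) auto
    also have "2 powr (-\<alpha>) * x powr (-\<alpha>) * L (2 * x) = F (2 * x)"
      using F[of "2 * x"] \<open>x > 0\<close> by (simp add: powr_mult)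
    finally show ?thesis .
  qed
  moreover have "F x0 > 0"
    using F x1[of x0] by (simp add: x0_def)
  ultimately show ?thesis
    by (intro exI[of _ x0]) (auto simp: x0_def)
qed

lemma tail_at_shrunk_threshold_LIMSEQ:
  fixes F :: "real \<Rightarrow> real" and b :: "nat \<Rightarrow> real"
  assumes anti: "antimono F" and F_nonneg: "\<And>x. F x \<ge> 0"
    and dbl: "\<And>x. x \<ge> x0 \<Longrightarrow> F x \<le> K * F (2 * x)" and K: "K \<ge> 1"
    and x0: "x0 > 0" "F x0 > 0"
    and \<mu>: "\<mu> > 1" and C: "\<And>n. \<mu> ^ n * F (b n) \<le> C" and \<theta>: "\<theta> > 0"
  shows "(\<lambda>n. \<mu> ^ n * real n ^ 2 * F (b n * \<theta> / real n) ^ 2) \<longlonglongrightarrow> 0"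
proof -
  define c where "c = K * C / \<theta> powr log 2 K"
  define bound where "bound n = c * real n powr log 2 K / \<mu> ^ n" for n
  have \<mu>_exp: "\<mu> ^ n = exp (real n * ln \<mu>)" for n
    using \<mu> by (simp add: exp_of_nat_mult)
  have "ln \<mu> > 0"
    using \<mu> by simp
  (* The threshold b n * \<theta> / n is not known to lie in the doubling range [x0, \<infinity>) yet; clamping
     it at x0 and comparing with F x0 shows that it eventually does. *)
  have below_bound: "F (max x0 (b n * \<theta> / real n)) \<le> bound n" if n: "real n \<ge> \<theta>" for n
  proof -
    define x where "x = max x0 (b n * \<theta> / real n)"
    have "F x \<le> K * (real n / \<theta>) powr log 2 K * F (real n / \<theta> * x)"
      using doubling_scale_bound[OF anti F_nonneg dbl K x0(1), of x "real n / \<theta>"] n \<theta>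
      by (simp add: x_def)
    also have "F (real n / \<theta> * x) \<le> F (b n)"
    proof (rule antimonoD[OF anti])
      have "real n / \<theta> * (b n * \<theta> / real n) \<le> real n / \<theta> * x"
        using \<theta> by (intro mult_left_mono) (auto simp: x_def)
      thus "b n \<le> real n / \<theta> * x"
        using n \<theta> by simp
    qed
    also have "F (b n) \<le> C / \<mu> ^ n"
      using C[of n] \<mu> by (simp add: pos_le_divide_eq mult.commute)
    finally have "F x \<le> K * (real n / \<theta>) powr log 2 K * (C / \<mu> ^ n)"
      using K \<theta> by (simp add: mult_left_mono)
    also have "\<dots> = bound n"
      using n \<theta> by (simp add: bound_def c_def powr_divide)
    finally show ?thesis unfolding x_def .
  qed
  have "bound \<longlonglongrightarrow> 0"
    unfolding bound_def times_divide_eq_right[symmetric] \<mu>_exp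
    by (intro tendsto_mult_right_zero) (use \<open>ln \<mu> > 0\<close> in real_asymp)
  hence "eventually (\<lambda>n. bound n < F x0) sequentially"
    using x0 by (intro order_tendstoD(2))
  moreover have "eventually (\<lambda>n. real n \<ge> \<theta>) sequentially"
    by real_asymp
  ultimately have ev: "eventually (\<lambda>n. F (b n * \<theta> / real n) \<le> bound n) sequentially"
  proof eventually_elim
    case (elim n)
    hence "max x0 (b n * \<theta> / real n) \<noteq> x0"
      using below_bound by force
    thus ?case
      using below_bound[OF elim(2)] by (metis max_def)
  qed
  have "(\<lambda>n. c\<^sup>2 * (real n ^ 2 * (real n powr log 2 K)\<^sup>2 / \<mu> ^ n)) \<longlonglongrightarrow> 0"
    unfolding \<mu>_exp by (intro tendsto_mult_right_zero) (use \<open>ln \<mu> > 0\<close> in real_asymp)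
  also have "(\<lambda>n. c\<^sup>2 * (real n ^ 2 * (real n powr log 2 K)\<^sup>2 / \<mu> ^ n)) = (\<lambda>n. \<mu> ^ n * real n ^ 2 * bound n ^ 2)"
    using \<mu> by (simp add: bound_def field_simps power2_eq_square)
  finally have bound_LIMSEQ: "(\<lambda>n. \<mu> ^ n * real n ^ 2 * bound n ^ 2) \<longlonglongrightarrow> 0" .
  have upper: "eventually (\<lambda>n. \<mu> ^ n * real n ^ 2 * F (b n * \<theta> / real n) ^ 2 \<le> \<mu> ^ n * real n ^ 2 * bound n ^ 2) sequentially"
    using ev by eventually_elim (use \<mu> F_nonneg in \<open>auto intro!: mult_left_mono power_mono\<close>)
  have lower: "eventually (\<lambda>n. 0 \<le> \<mu> ^ n * real n ^ 2 * F (b n * \<theta> / real n) ^ 2) sequentially"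
    using \<mu> by simp
  show ?thesis
    by (rule tendsto_sandwich[OF lower upper tendsto_const bound_LIMSEQ])
qed

definition clip_abs :: "ereal \<Rightarrow> ereal" where
  "clip_abs x = max (min 1 (max (ereal (1/2)) x)) (min 1 (max (ereal (1/2)) (- x)))"

definition ramp :: "ereal \<Rightarrow> real" where
  "ramp x = 2 * real_of_ereal (clip_abs x) - 1"

lemma clip_abs_real: "\<exists>r. clip_abs x = ereal r \<and> 1/2 \<le> r \<and> r \<le> 1"
proof -
  have "ereal (1/2) \<le> clip_abs x" "clip_abs x \<le> 1"
    unfolding clip_abs_def by (auto simp: max_def min_def)
  thus ?thesis
    by (cases "clip_abs x") auto
qed

lemma ramp_nonneg: "ramp x \<ge> 0" and ramp_le_1: "ramp x \<le> 1"
  using clip_abs_real[of x] by (auto simp: ramp_def)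

lemma ramp_eq_1: "\<bar>y\<bar> > 1 \<Longrightarrow> ramp (ereal y) = 1"
  by (auto simp: ramp_def clip_abs_def max_def min_def)

lemma cont_compact_supp_away0_ramp: "cont_compact_supp_away0 ramp"
  unfolding cont_compact_supp_away0_def
proof (intro conjI exI[of _ "1/2"] allI impI)
  have "continuous_on UNIV clip_abs"
    unfolding clip_abs_def by (intro continuous_intros)
  moreover have "\<bar>clip_abs x\<bar> \<noteq> \<infinity>" for x
    using clip_abs_real[of x] by auto
  ultimately have "continuous_on UNIV (real_of_ereal \<circ> clip_abs)"
    by (subst continuous_on_iff_real[symmetric]) auto
  thus "continuous_on UNIV ramp"
    unfolding ramp_def o_def by (intro continuous_intros) auto
next
  fix y :: real
  assume "\<bar>y\<bar> < 1/2"
  thus "ramp (ereal y) = 0"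
    by (auto simp: ramp_def clip_abs_def max_def min_def)
qed simp

lemma vague_conv_nu_alpha_tail_bounded:
  fixes M :: "'w measure" and Y :: "'w \<Rightarrow> real"
  assumes "prob_space M" and Y: "Y \<in> borel_measurable M"
    and vague: "vague_conv_nu_alpha M Y \<mu> b \<alpha> p q" and b: "\<And>n. b n > 0" and \<mu>: "\<mu> \<ge> 0"
  shows "\<exists>C. \<forall>n. \<mu> ^ n * measure M {w \<in> space M. \<bar>Y w\<bar> > b n} \<le> C"
proof -
  interpret prob_space M by fact
  have "convergent (\<lambda>n. \<mu> ^ n * expectation (\<lambda>w. ramp (ereal (Y w / b n))))"
    using vague cont_compact_supp_away0_ramp unfolding vague_conv_nu_alpha_def convergent_def by blast
  hence "Bseq (\<lambda>n. \<mu> ^ n * expectation (\<lambda>w. ramp (ereal (Y w / b n))))"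
    by (rule convergent_imp_Bseq)
  then obtain C where C: "\<And>n. norm (\<mu> ^ n * expectation (\<lambda>w. ramp (ereal (Y w / b n)))) \<le> C"
    unfolding Bseq_def by blast
  have "\<mu> ^ n * prob {w \<in> space M. \<bar>Y w\<bar> > b n} \<le> C" for n
  proof -
    have ramp_meas: "ramp \<in> borel_measurable borel"
      using cont_compact_supp_away0_ramp unfolding cont_compact_supp_away0_def
      by (intro borel_measurable_continuous_onI) auto
    have big_sets: "{w \<in> space M. \<bar>Y w\<bar> > b n} \<in> events"
      using Y by measurable
    hence "prob {w \<in> space M. \<bar>Y w\<bar> > b n} = expectation (indicator {w \<in> space M. \<bar>Y w\<bar> > b n})"
      by simp
    also have "\<dots> \<le> expectation (\<lambda>w. ramp (ereal (Y w / b n)))"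
    proof (rule integral_mono)
      show "integrable M (\<lambda>w. ramp (ereal (Y w / b n)))"
        using ramp_meas Y ramp_nonneg ramp_le_1 by (intro integrable_const_bound[where B=1]) auto
      show "indicator {w \<in> space M. \<bar>Y w\<bar> > b n} w \<le> ramp (ereal (Y w / b n))" for w
        using b[of n] ramp_eq_1[of "Y w / b n"] ramp_nonneg
        by (auto simp: abs_divide split: split_indicator)
      show "integrable M (indicator {w \<in> space M. \<bar>Y w\<bar> > b n} :: 'w \<Rightarrow> real)"
        using big_sets by (intro integrable_real_indicator) (simp_all add: less_top[symmetric])
    qed
    finally have "\<mu> ^ n * prob {w \<in> space M. \<bar>Y w\<bar> > b n} \<le> \<mu> ^ n * expectation (\<lambda>w. ramp (ereal (Y w / b n)))"
      using \<mu> by (simp add: mult_left_mono)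
    also have "\<dots> \<le> C"
      using abs_le_D1[OF C[of n, unfolded real_norm_def]] .
    finally show ?thesis .
  qed
  thus ?thesis
    by blast
qed

lemma nn_integral_lists_length_prod:
  fixes h :: "nat \<Rightarrow> ennreal"
  shows "(\<integral>\<^sup>+v. (\<Prod>m<length v. h (v ! m)) \<partial>count_space {v. length v = n})
    = (\<integral>\<^sup>+i. h i \<partial>count_space UNIV) ^ n"
proof (induction n)
  case 0
  have "{v :: nat list. length v = 0} = {[]}"
    by auto
  thus ?case
    by (simp add: nn_integral_count_space_finite)
next
  case (Suc n)
  define V where "V = {v :: nat list. length v = n}"
  define G where "G v = (\<Prod>m<length v. h (v ! m))" for v
  interpret V: sigma_finite_measure "count_space V"
    by (rule sigma_finite_measure_count_space_countable) (simp add: V_def)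
  have bij: "bij_betw (\<lambda>(i, v). i # v) (UNIV \<times> V) {v. length v = Suc n}"
    by (rule bij_betw_byWitness[where f'="\<lambda>v. (hd v, tl v)"]) (auto simp: V_def length_Suc_conv)
  have cons: "G (i # v) = h i * G v" for i v
    by (simp only: G_def length_Cons prod.lessThan_Suc_shift nth_Cons_0 nth_Cons_Suc)
  have "(\<integral>\<^sup>+v. G v \<partial>count_space {v. length v = Suc n})
      = (\<integral>\<^sup>+(i, v). G (i # v) \<partial>(count_space UNIV \<Otimes>\<^sub>M count_space V))"
    by (simp add: nn_integral_bij_count_space[OF bij, symmetric] pair_measure_countable V_def
        case_prod_beta')
  also have "\<dots> = (\<integral>\<^sup>+i. \<integral>\<^sup>+v. h i * G v \<partial>count_space V \<partial>count_space UNIV)"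
    by (subst V.nn_integral_fst[symmetric])
      (auto simp: cons pair_measure_countable V_def)
  also have "\<dots> = (\<integral>\<^sup>+i. h i \<partial>count_space UNIV) * (\<integral>\<^sup>+v. G v \<partial>count_space V)"
    by (simp add: nn_integral_cmult nn_integral_multc)
  finally show ?case
    using Suc by (simp add: G_def V_def mult.commute)
qed

lemma emeasure_UN_countable_le:
  assumes "countable V" and U: "\<And>v. v \<in> V \<Longrightarrow> U v \<in> sets M"
  shows "emeasure M (\<Union>v\<in>V. U v) \<le> (\<integral>\<^sup>+v. emeasure M (U v) \<partial>count_space V)"
proof -
  have "emeasure M (\<Union>v\<in>V. U v) = (\<integral>\<^sup>+w. indicator (\<Union>v\<in>V. U v) w \<partial>M)"
    using assms by (simp add: sets.countable_UN'')
  also have "\<dots> \<le> (\<integral>\<^sup>+w. \<integral>\<^sup>+v. indicator (U v) w \<partial>count_space V \<partial>M)"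
  proof (rule nn_integral_mono)
    fix w
    show "indicator (\<Union>v\<in>V. U v) w \<le> (\<integral>\<^sup>+v. indicator (U v) w \<partial>count_space V)"
    proof (cases "w \<in> (\<Union>v\<in>V. U v)")
      case True
      then obtain v0 where v0: "v0 \<in> V" "w \<in> U v0"
        by auto
      have "indicator (\<Union>v\<in>V. U v) w = (\<integral>\<^sup>+v. indicator {v0} v \<partial>count_space V)"
        using True v0 by (simp add: nn_integral_indicator)
      also have "\<dots> \<le> (\<integral>\<^sup>+v. indicator (U v) w \<partial>count_space V)"
        using v0 by (intro nn_integral_mono) (auto split: split_indicator)
      finally show ?thesis .
    qed simp
  qed
  also have "\<dots> = (\<integral>\<^sup>+v. emeasure M (U v) \<partial>count_space V)"
    using assms by (subst nn_integral_count_space_nn_integral) (auto intro!: nn_integral_cong)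
  finally show ?thesis .
qed

lemma (in prob_space) nn_integral_tail_probs_eq_expectation:
  fixes Z :: "'a \<Rightarrow> nat"
  assumes Z: "Z \<in> measurable M (count_space UNIV)" and int: "integrable M (\<lambda>w. real (Z w))"
  shows "(\<integral>\<^sup>+i. ennreal (prob {w \<in> space M. i < Z w}) \<partial>count_space UNIV) = expectation (\<lambda>w. real (Z w))"
proof -
  have sets: "{w \<in> space M. i < Z w} \<in> sets M" for i
    using Z by measurable
  have "(\<integral>\<^sup>+i. ennreal (prob {w \<in> space M. i < Z w}) \<partial>count_space UNIV)
      = (\<integral>\<^sup>+i. \<integral>\<^sup>+w. indicator {w \<in> space M. i < Z w} w \<partial>M \<partial>count_space UNIV)"
    using sets by (simp add: emeasure_eq_measure)
  also have "\<dots> = (\<integral>\<^sup>+w. \<integral>\<^sup>+i. indicator {w \<in> space M. i < Z w} w \<partial>count_space UNIV \<partial>M)"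
    using sets by (subst nn_integral_count_space_nn_integral) auto
  also have "\<dots> = (\<integral>\<^sup>+w. \<integral>\<^sup>+i. indicator {..<Z w} i \<partial>count_space UNIV \<partial>M)"
    by (intro nn_integral_cong) (auto split: split_indicator)
  also have "\<dots> = (\<integral>\<^sup>+w. ennreal (real (Z w)) \<partial>M)"
    by (simp add: ennreal_of_nat_eq_real_of_nat)
  also have "\<dots> = expectation (\<lambda>w. real (Z w))"
    by (rule nn_integral_eq_integral[OF int]) simp
  finally show ?thesis .
qed

lemma (in prob_space) indep_vars_prob_INT:
  assumes "indep_vars (\<lambda>_. borel) Y UNIV" and "finite J" "J \<noteq> {}" and "\<And>i. S i \<in> sets borel"
  shows "prob (\<Inter>i\<in>J. Y i -` S i \<inter> space M) = (\<Prod>i\<in>J. prob (Y i -` S i \<inter> space M))"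
  using assms unfolding indep_vars_def2 by (intro indep_setsD) auto

lemma measure_vimage_eq_if_distr_eq:
  assumes "f \<in> measurable M N" "g \<in> measurable M N" "distr M N f = distr M N g" "B \<in> sets N"
  shows "measure M (f -` B \<inter> space M) = measure M (g -` B \<inter> space M)"
  using assms by (metis measure_distr)

lemma finite_increasing_pairs: "finite {(k, j). k < j \<and> j < (n :: nat)}"
  by (rule finite_subset[of _ "{..<n} \<times> {..<n}"]) auto

lemma card_increasing_pairs_le: "card {(k, j). k < j \<and> j < (n :: nat)} \<le> n ^ 2"
proof -
  have "card {(k, j). k < j \<and> j < n} \<le> card ({..<n} \<times> {..<n})"
    by (intro card_mono) auto
  thus ?thesis
    by (simp add: card_cartesian_product power2_eq_square)
qed

locale gw_edge_labelled_tree = prob_space M for M :: "'w measure" +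
  fixes N :: "nat list \<Rightarrow> 'w \<Rightarrow> nat" and X :: "nat list \<Rightarrow> 'w \<Rightarrow> real"
  assumes N_meas[measurable]: "\<And>u. N u \<in> measurable M (count_space UNIV)"
    and X_meas[measurable]: "\<And>u. X u \<in> borel_measurable M"
    and indep: "indep_vars (\<lambda>_. borel) (\<lambda>i w. case i of Inl u \<Rightarrow> real (N u w) | Inr u \<Rightarrow> X u w) UNIV"
    and N_ident: "\<And>u. distr M (count_space UNIV) (N u) = distr M (count_space UNIV) (N [])"
    and X_ident: "\<And>u. distr M borel (X u) = distr M borel (X [])"
begin

definition offspring_tail :: "nat \<Rightarrow> real" where
  "offspring_tail i = prob {w \<in> space M. i < N [] w}"

definition edge_tail :: "real \<Rightarrow> real" where
  "edge_tail t = prob {w \<in> space M. t < \<bar>X [] w\<bar>}"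

definition big_edge_pair :: "nat list \<Rightarrow> nat \<Rightarrow> nat \<Rightarrow> real \<Rightarrow> 'w set" where
  "big_edge_pair v k j t = {w \<in> space M. gw_vertex N w v
     \<and> t < \<bar>X (take (Suc k) v) w\<bar> \<and> t < \<bar>X (take (Suc j) v) w\<bar>}"

definition two_big_edges :: "nat \<Rightarrow> real \<Rightarrow> 'w set" where
  "two_big_edges n t = (\<Union>v\<in>{v. length v = n}. \<Union>(k, j)\<in>{(k, j). k < j \<and> j < n}. big_edge_pair v k j t)"

lemma prob_offspring_greater: "prob {w \<in> space M. i < N u w} = offspring_tail i"
  using measure_vimage_eq_if_distr_eq[OF N_meas N_meas N_ident, of "{i<..}" u]
  unfolding offspring_tail_def by (simp add: vimage_def Int_def conj_commute)

lemma prob_edge_greater: "prob {w \<in> space M. t < \<bar>X u w\<bar>} = edge_tail t"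
proof -
  have "{x :: real. t < \<bar>x\<bar>} \<in> sets borel"
    by measurable
  from measure_vimage_eq_if_distr_eq[OF X_meas X_meas X_ident this, of u]
  show ?thesis
    unfolding edge_tail_def by (simp add: vimage_def Int_def conj_commute)
qed

lemma antimono_edge_tail: "antimono edge_tail"
  unfolding edge_tail_def by (intro antimonoI finite_measure_mono) auto

lemma big_edge_pair_sets[measurable]: "big_edge_pair v k j t \<in> sets M"
  unfolding big_edge_pair_def gw_vertex_def by measurable

lemma two_big_edges_sets[measurable]: "two_big_edges n t \<in> sets M"
  unfolding two_big_edges_def using finite_increasing_pairs by (intro sets.countable_UN'' sets.finite_UN) auto

definition tree_var :: "nat list + nat list \<Rightarrow> 'w \<Rightarrow> real" where
  "tree_var i w = (case i of Inl u \<Rightarrow> real (N u w) | Inr u \<Rightarrow> X u w)"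

definition path_constraint :: "nat list \<Rightarrow> real \<Rightarrow> nat list + nat list \<Rightarrow> real set" where
  "path_constraint v t i = (case i of Inl u \<Rightarrow> {x. real (v ! length u) < x} | Inr u \<Rightarrow> {x. t < \<bar>x\<bar>})"

lemma big_edge_pair_eq_INT:
  assumes "length v = n" "k < n" "j < n"
  shows "big_edge_pair v k j t = (\<Inter>i \<in> (\<lambda>m. Inl (take m v)) ` {..<n} \<union> {Inr (take (Suc k) v), Inr (take (Suc j) v)}.
    tree_var i -` path_constraint v t i \<inter> space M)"
  using assms unfolding big_edge_pair_def gw_vertex_def tree_var_def path_constraint_def by auto

lemma prob_big_edge_pair:
  assumes v: "length v = n" and kj: "k < j" "j < n"
  shows "prob (big_edge_pair v k j t) = (\<Prod>m<n. offspring_tail (v ! m)) * edge_tail t ^ 2"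
proof -
  define P where "P i = prob (tree_var i -` path_constraint v t i \<inter> space M)" for i
  define vertices where "vertices = (\<lambda>m. Inl (take m v) :: nat list + nat list) ` {..<n}"
  define edges where "edges = {Inr (take (Suc k) v), Inr (take (Suc j) v) :: nat list + nat list}"
  have "prob (big_edge_pair v k j t) = prob (\<Inter>i \<in> vertices \<union> edges. tree_var i -` path_constraint v t i \<inter> space M)"
    using big_edge_pair_eq_INT[OF v] kj by (simp add: vertices_def edges_def)
  also have "\<dots> = (\<Prod>i \<in> vertices \<union> edges. P i)"
    unfolding P_def using indep
    by (intro indep_vars_prob_INT) (auto simp: tree_var_def[abs_def] path_constraint_def vertices_def edges_def
        split: sum.split)
  also have "\<dots> = (\<Prod>i \<in> vertices. P i) * (\<Prod>i \<in> edges. P i)"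
    by (rule prod.union_disjoint) (auto simp: vertices_def edges_def)
  also have "(\<Prod>i \<in> vertices. P i) = (\<Prod>m<n. offspring_tail (v ! m))"
  proof -
    have "inj_on (\<lambda>m. Inl (take m v) :: nat list + nat list) {..<n}"
      using v by (auto intro!: inj_onI dest!: arg_cong[where f = length])
    moreover have "P (Inl (take m v)) = offspring_tail (v ! m)" if "m < n" for m
      using that v prob_offspring_greater[of "v ! m" "take m v"]
      by (simp add: P_def tree_var_def path_constraint_def vimage_def Int_def conj_commute)
    ultimately show ?thesis
      unfolding vertices_def by (simp add: prod.reindex)
  qed
  also have "(\<Prod>i \<in> edges. P i) = edge_tail t ^ 2"
  proof -
    have "P (Inr u) = edge_tail t" for u
      using prob_edge_greater[of t u]
      by (simp add: P_def tree_var_def path_constraint_def vimage_def Int_def conj_commute)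
    moreover have "take (Suc k) v \<noteq> take (Suc j) v"
      using v kj by (auto dest!: arg_cong[where f = length])
    ultimately show ?thesis
      by (simp add: edges_def power2_eq_square)
  qed
  finally show ?thesis .
qed

lemma nn_integral_vertex_weights_eq_power:
  assumes "integrable M (\<lambda>w. real (N [] w))"
  shows "(\<integral>\<^sup>+v. ennreal (\<Prod>m<length v. offspring_tail (v ! m)) \<partial>count_space {v. length v = n})
    = ennreal (expectation (\<lambda>w. real (N [] w)) ^ n)"
proof -
  have "(\<integral>\<^sup>+v. ennreal (\<Prod>m<length v. offspring_tail (v ! m)) \<partial>count_space {v. length v = n})
      = (\<integral>\<^sup>+i. ennreal (offspring_tail i) \<partial>count_space UNIV) ^ n"
    by (simp add: offspring_tail_def flip: prod_ennreal nn_integral_lists_length_prod)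
  also have "\<dots> = ennreal (expectation (\<lambda>w. real (N [] w))) ^ n"
    unfolding offspring_tail_def using assms by (simp add: nn_integral_tail_probs_eq_expectation)
  finally show ?thesis
    by (simp add: ennreal_power)
qed

lemma prob_two_big_edges_le:
  assumes "integrable M (\<lambda>w. real (N [] w))"
  shows "prob (two_big_edges n t) \<le> expectation (\<lambda>w. real (N [] w)) ^ n * real n ^ 2 * edge_tail t ^ 2"
proof -
  define \<mu> where "\<mu> = expectation (\<lambda>w. real (N [] w))"
  define pairs where "pairs = {(k, j). k < j \<and> j < n}"
  have card_pairs: "real (card pairs) \<le> real n ^ 2"
    using card_increasing_pairs_le[of n] unfolding pairs_def by (simp flip: of_nat_power)
  have "emeasure M (two_big_edges n t)
      \<le> (\<integral>\<^sup>+v. emeasure M (\<Union>(k, j)\<in>pairs. big_edge_pair v k j t) \<partial>count_space {v. length v = n})"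
    unfolding two_big_edges_def pairs_def
    by (rule emeasure_UN_countable_le) (auto intro!: sets.finite_UN simp: finite_increasing_pairs)
  also have "\<dots> \<le> (\<integral>\<^sup>+v. ennreal (real n ^ 2 * edge_tail t ^ 2) * ennreal (\<Prod>m<length v. offspring_tail (v ! m))
      \<partial>count_space {v. length v = n})"
  proof (intro nn_integral_mono)
    fix v :: "nat list"
    assume "v \<in> space (count_space {v. length v = n})"
    hence v: "length v = n"
      by simp
    have "emeasure M (\<Union>(k, j)\<in>pairs. big_edge_pair v k j t) \<le> (\<Sum>(k, j)\<in>pairs. emeasure M (big_edge_pair v k j t))"
      using emeasure_subadditive_finite[of pairs "\<lambda>(k, j). big_edge_pair v k j t" M] finite_increasing_pairs
      by (simp add: pairs_def split_beta' image_subset_iff big_edge_pair_sets)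
    also have "\<dots> = ennreal (real (card pairs) * ((\<Prod>m<n. offspring_tail (v ! m)) * edge_tail t ^ 2))"
      using v by (simp add: emeasure_eq_measure prob_big_edge_pair pairs_def case_prod_beta' prod_nonneg
          offspring_tail_def ennreal_of_nat_eq_real_of_nat ennreal_mult' flip: sum.cong)
    also have "\<dots> \<le> ennreal (real n ^ 2 * edge_tail t ^ 2) * ennreal (\<Prod>m<length v. offspring_tail (v ! m))"
      using card_pairs v by (auto simp: ennreal_mult'[symmetric] offspring_tail_def prod_nonneg mult_ac
          intro!: ennreal_leI mult_right_mono)
    finally show "emeasure M (\<Union>(k, j)\<in>pairs. big_edge_pair v k j t)
        \<le> ennreal (real n ^ 2 * edge_tail t ^ 2) * ennreal (\<Prod>m<length v. offspring_tail (v ! m))" .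
  qed
  also have "\<dots> = ennreal (real n ^ 2 * edge_tail t ^ 2) * ennreal (\<mu> ^ n)"
    by (simp add: nn_integral_cmult nn_integral_vertex_weights_eq_power[OF assms] \<mu>_def)
  also have "\<dots> = ennreal (\<mu> ^ n * real n ^ 2 * edge_tail t ^ 2)"
    by (subst ennreal_mult'[symmetric]) (simp_all add: mult_ac)
  finally show ?thesis
    by (simp add: emeasure_eq_measure \<mu>_def ennreal_le_iff)
qed

lemma compl_A_event_subset_two_big_edges:
  "space M - A_event N X b \<theta> n \<subseteq> two_big_edges n (b n * \<theta> / real n)"
proof
  fix w
  assume "w \<in> space M - A_event N X b \<theta> n"
  then obtain v where w: "w \<in> space M" and v: "length v = n" "gw_vertex N w v"
    and "\<not> card {k. k < n \<and> \<bar>X (take (Suc k) v) w\<bar> > b n * \<theta> / real n} \<le> Suc 0"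
    unfolding A_event_def by auto
  then obtain k j where "k \<noteq> j" and
    big: "k < n \<and> \<bar>X (take (Suc k) v) w\<bar> > b n * \<theta> / real n" "j < n \<and> \<bar>X (take (Suc j) v) w\<bar> > b n * \<theta> / real n"
    by (subst (asm) card_le_Suc0_iff_eq) auto
  hence "w \<in> big_edge_pair v (min k j) (max k j) (b n * \<theta> / real n)"
    using w v by (auto simp: big_edge_pair_def min_def max_def)
  moreover have "min k j < max k j" "max k j < n"
    using \<open>k \<noteq> j\<close> big by auto
  ultimately show "w \<in> two_big_edges n (b n * \<theta> / real n)"
    using v unfolding two_big_edges_def by blast
qed

end

theorem mainTheorem9:
  fixes M :: "'w measure"
    and N :: "nat list \<Rightarrow> 'w \<Rightarrow> nat"
    and X :: "nat list \<Rightarrow> 'w \<Rightarrow> real"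
    and \<mu> \<alpha> p q \<theta> :: real and b :: "nat \<Rightarrow> real"
  assumes "prob_space M"
    and N_meas: "\<And>u. N u \<in> measurable M (count_space UNIV)"
    and X_meas: "\<And>u. X u \<in> borel_measurable M"
    and indep: "prob_space.indep_vars M (\<lambda>_. borel)
          (\<lambda>i w. case i of Inl u \<Rightarrow> real (N u w) | Inr u \<Rightarrow> X u w) UNIV"
    and N_ident: "\<And>u. distr M (count_space UNIV) (N u) = distr M (count_space UNIV) (N [])"
    and X_ident: "\<And>u. distr M borel (X u) = distr M borel (X [])"
    and mu_int: "integrable M (\<lambda>w. real (N [] w))"
    and mu_def: "\<mu> = (\<integral>w. real (N [] w) \<partial>M)"
    and mu_gt1: "\<mu> > 1"
    and LlogL: "integrable M (\<lambda>w. real (N [] w) * max 0 (ln (real (N [] w))))"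
    and alpha_pos: "\<alpha> > 0"
    and tail: "\<exists>L. slowly_varying L \<and>
          (\<forall>x>0. measure M {w \<in> space M. \<bar>X [] w\<bar> > x} = x powr (-\<alpha>) * L x)"
    and pq: "p \<ge> 0" "q \<ge> 0" "p + q = 1"
    and tail_p: "((\<lambda>x. measure M {w \<in> space M. X [] w > x}
                     / measure M {w \<in> space M. \<bar>X [] w\<bar> > x}) \<longlongrightarrow> p) at_top"
    and tail_q: "((\<lambda>x. measure M {w \<in> space M. X [] w < - x}
                     / measure M {w \<in> space M. \<bar>X [] w\<bar> > x}) \<longlongrightarrow> q) at_top"
    and b_pos: "\<And>n. b n > 0"
    and b_vague: "vague_conv_nu_alpha M (X []) \<mu> b \<alpha> p q"
    and theta_pos: "\<theta> > 0"
  shows "(\<lambda>n. measure M ((space M - A_event N X b \<theta> n) \<inter> gw_survival N)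
              / measure M (space M \<inter> gw_survival N)) \<longlonglongrightarrow> 0"
proof -
  interpret gw_edge_labelled_tree M N X
    using assms by (intro gw_edge_labelled_tree.intro gw_edge_labelled_tree_axioms.intro) auto
  obtain L where "slowly_varying L" and "\<forall>x>0. edge_tail x = x powr (-\<alpha>) * L x"
    using tail by (auto simp: edge_tail_def)
  then obtain x0 where x0: "x0 > 0" "edge_tail x0 > 0"
    and doubling: "\<And>x. x \<ge> x0 \<Longrightarrow> edge_tail x \<le> (2 powr \<alpha> + 1) * edge_tail (2 * x)"
    using slowly_varying_tail_doubling by blast
  obtain C where C: "\<And>n. \<mu> ^ n * edge_tail (b n) \<le> C"
    using vague_conv_nu_alpha_tail_bounded[OF \<open>prob_space M\<close> X_meas b_vague b_pos] mu_gt1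
    by (fastforce simp: edge_tail_def)
  have "(\<lambda>n. \<mu> ^ n * real n ^ 2 * edge_tail (b n * \<theta> / real n) ^ 2) \<longlonglongrightarrow> 0"
    using antimono_edge_tail x0 mu_gt1 C theta_pos
    by (intro tail_at_shrunk_threshold_LIMSEQ[where F = edge_tail, OF _ _ doubling]) (auto simp: edge_tail_def)
  hence limit: "(\<lambda>n. \<mu> ^ n * real n ^ 2 * edge_tail (b n * \<theta> / real n) ^ 2
      / measure M (space M \<inter> gw_survival N)) \<longlonglongrightarrow> 0"
    by (rule tendsto_divide_zero)
  have "measure M ((space M - A_event N X b \<theta> n) \<inter> gw_survival N)
      \<le> \<mu> ^ n * real n ^ 2 * edge_tail (b n * \<theta> / real n) ^ 2" for n
  proof -
    have "measure M ((space M - A_event N X b \<theta> n) \<inter> gw_survival N) \<le> prob (two_big_edges n (b n * \<theta> / real n))"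
      using compl_A_event_subset_two_big_edges two_big_edges_sets by (intro finite_measure_mono) auto
    also have "\<dots> \<le> \<mu> ^ n * real n ^ 2 * edge_tail (b n * \<theta> / real n) ^ 2"
      using prob_two_big_edges_le[OF mu_int] by (simp add: mu_def)
    finally show ?thesis .
  qed
  thus ?thesis
    by (intro tendsto_sandwich[OF _ _ tendsto_const limit] always_eventually allI divide_right_mono) auto
qed

end
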